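(* Let $(x_k)_{k\ge0}$ be real random variables satisfying $x_{k+1}=x_k+\alpha_k(-x_k+w_k)$ with step sizes $\alpha_k\in(0,1]$, and let $\mathcal F_k=\sigma(x_0,\dots,x_k)$. Assume that a.s. $\mathbb{E}[w_k\mid\mathcal F_k]=0$, $\mathbb{E}[w_k^2\mid\mathcal F_k]\le A_2$, $\mathbb{E}[|w_k|^3\mid\mathcal F_k]\le A_3$, $\mathbb{E}[w_k^4\mid\mathcal F_k]\le A_4$ for constants $A_2,A_3,A_4$. Then there exist constants $c,C'>0$ (independent of $k$) such that for all $k$, $$\mathbb{E}[x_{k+1}^4\mid\mathcal F_k]\le x_k^4-c\,\alpha_kx_k^4+C'\alpha_k^3 .$$ Consequently, if $\sum_k\alpha_k=\infty$ and $\sum_k\alpha_k^3<\infty$, then $x_k\to0$ almost surely. *)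

theory Defs
  imports "HOL-Probability.Probability"
begin

definition nat_filtration :: "'a measure \<Rightarrow> (nat \<Rightarrow> 'a \<Rightarrow> real) \<Rightarrow> nat \<Rightarrow> 'a measure" where
  "nat_filtration M X k =
     sigma (space M) (\<Union>i\<in>{..k}. {X i -` B \<inter> space M | B. B \<in> sets borel})"

end

theory Submission
  imports Defs
begin

(* With y = (1 - a) x, expand (y + a w)^4. The term 4 a y^3 w has conditional mean zero, and the
   conditional moments of w bound the rest by y^4 + 6 a^2 y^2 A2 + 4 a^3 |y| A3 + a^4 A4; elementary
   inequalities absorb the middle terms into a x^4 / 2, giving the drift inequality
   E[x_{k+1}^4 | F_k] <= (1 - a_k/2) x_k^4 + C a_k^3.
   For convergence (a Robbins-Siegmund argument): if E[V_{k+1} | F_k] <= (1 - a_k) V_k + b_k with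
   V >= 0 and sum b < oo, then V_k + sum_{j>=k} b_j is a nonnegative supermartingale, so Doob's maximal
   inequality bounds the probability that it ever exceeds c after time k by its expectation at k over c.
   Restricted to {V_0 <= r} these expectations are finite, and sum a = oo forces E[V_k] to be small
   for infinitely many k; hence V_k -> 0 almost surely. *)

lemma quartic_expansion_le:
  fixes y w a :: real
  assumes "0 \<le> a"
  shows "(y + a * w) ^ 4 \<le> y ^ 4 + 4 * a * y ^ 3 * w + 6 * a\<^sup>2 * y\<^sup>2 * w\<^sup>2 + 4 * a ^ 3 * \<bar>y\<bar> * \<bar>w\<bar> ^ 3 + a ^ 4 * w ^ 4"
proof -
  have "y * w ^ 3 \<le> \<bar>y\<bar> * \<bar>w\<bar> ^ 3"
    by (metis abs_ge_self abs_mult power_abs)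
  then have "4 * a ^ 3 * (y * w ^ 3) \<le> 4 * a ^ 3 * (\<bar>y\<bar> * \<bar>w\<bar> ^ 3)"
    using assms by (intro mult_left_mono) auto
  moreover have "(y + a * w) ^ 4 = y ^ 4 + 4 * a * y ^ 3 * w + 6 * a\<^sup>2 * y\<^sup>2 * w\<^sup>2 + 4 * a ^ 3 * (y * w ^ 3) + a ^ 4 * w ^ 4"
    by algebra
  ultimately show ?thesis by (simp add: algebra_simps)
qed

lemma quadratic_term_le:
  fixes a x A :: real
  assumes "0 \<le> a"
  shows "6 * a\<^sup>2 * x\<^sup>2 * A \<le> a * x ^ 4 / 4 + 36 * A\<^sup>2 * a ^ 3"
proof -
  have "0 \<le> a * (x\<^sup>2 / 2 - 6 * A * a)\<^sup>2" using assms by simp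
  then show ?thesis by (simp add: power2_eq_square power4_eq_xxxx power3_eq_cube algebra_simps)
qed

lemma linear_term_le:
  fixes a x A :: real
  assumes "0 \<le> a" "a \<le> 1" "0 \<le> A"
  shows "4 * a ^ 3 * \<bar>x\<bar> * A \<le> a * x ^ 4 / 4 + 4 * A * (1 + 16 * A) * a ^ 3"
proof (cases "\<bar>x\<bar> \<le> 1 + 16 * A")
  case True
  then have "4 * a ^ 3 * \<bar>x\<bar> * A \<le> 4 * a ^ 3 * (1 + 16 * A) * A"
    using assms by (intro mult_right_mono mult_left_mono) auto
  moreover have "0 \<le> a * x ^ 4" using assms by simp
  ultimately show ?thesis by (simp add: algebra_simps)
next
  case False
  then have "1 \<le> \<bar>x\<bar>" using assms by linarith
  then have "\<bar>x\<bar> \<le> \<bar>x\<bar> ^ 3" using power_increasing[of 1 3 "\<bar>x\<bar>"] by simp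
  then have "16 * A \<le> \<bar>x\<bar> ^ 3" using False by linarith
  then have "4 * a ^ 3 * \<bar>x\<bar> * A \<le> a ^ 3 * \<bar>x\<bar> * \<bar>x\<bar> ^ 3 / 4"
    using assms mult_left_mono[of "16 * A" "\<bar>x\<bar> ^ 3" "a ^ 3 * \<bar>x\<bar>"] by simp
  also have "\<dots> = a ^ 3 * x ^ 4 / 4"
    by (simp add: abs_mult[symmetric] power4_eq_xxxx power3_eq_cube mult.assoc)
  also have "\<dots> \<le> a * x ^ 4 / 4"
    using power_decreasing[of 1 3 a] assms by (simp add: mult_right_mono)
  finally have "4 * a ^ 3 * \<bar>x\<bar> * A \<le> a * x ^ 4 / 4" .
  moreover have "0 \<le> 4 * A * (1 + 16 * A) * a ^ 3" using assms by simp
  ultimately show ?thesis by linarith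
qed

(* The summand 1 only makes the constant positive. *)
definition quartic_drift_const :: "real \<Rightarrow> real \<Rightarrow> real \<Rightarrow> real" where
  "quartic_drift_const A\<^sub>2 A\<^sub>3 A\<^sub>4 = 36 * A\<^sub>2\<^sup>2 + 4 * A\<^sub>3 * (1 + 16 * A\<^sub>3) + A\<^sub>4 + 1"

lemma quartic_drift_const_pos:
  "0 \<le> A\<^sub>3 \<Longrightarrow> 0 \<le> A\<^sub>4 \<Longrightarrow> 0 < quartic_drift_const A\<^sub>2 A\<^sub>3 A\<^sub>4"
  unfolding quartic_drift_const_def by (simp add: add_nonneg_pos)

lemma quartic_moment_bound:
  fixes a x A\<^sub>2 A\<^sub>3 A\<^sub>4 :: real
  assumes "0 \<le> a" "a \<le> 1" "0 \<le> A\<^sub>2" "0 \<le> A\<^sub>3" "0 \<le> A\<^sub>4"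
  defines "y \<equiv> (1 - a) * x"
  shows "y ^ 4 + 6 * a\<^sup>2 * y\<^sup>2 * A\<^sub>2 + 4 * a ^ 3 * \<bar>y\<bar> * A\<^sub>3 + a ^ 4 * A\<^sub>4
     \<le> (1 - a / 2) * x ^ 4 + quartic_drift_const A\<^sub>2 A\<^sub>3 A\<^sub>4 * a ^ 3"
proof -
  have y_abs: "\<bar>y\<bar> \<le> \<bar>x\<bar>"
    using assms by (auto simp: y_def abs_mult intro: mult_left_le_one_le)
  have "y ^ 4 \<le> (1 - a) * x ^ 4"
    using power_decreasing[of 1 4 "1 - a"] assms by (simp add: y_def power_mult_distrib mult_right_mono)
  moreover have "6 * a\<^sup>2 * y\<^sup>2 * A\<^sub>2 \<le> 6 * a\<^sup>2 * x\<^sup>2 * A\<^sub>2"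
    using y_abs assms by (intro mult_right_mono mult_left_mono) (auto simp: abs_le_square_iff)
  moreover have "4 * a ^ 3 * \<bar>y\<bar> * A\<^sub>3 \<le> 4 * a ^ 3 * \<bar>x\<bar> * A\<^sub>3"
    using y_abs assms by (intro mult_right_mono mult_left_mono) auto
  moreover have "a ^ 4 * A\<^sub>4 \<le> a ^ 3 * A\<^sub>4"
    using power_decreasing[of 3 4 a] assms by (intro mult_right_mono) auto
  moreover note quadratic_term_le[of a x A\<^sub>2] linear_term_le[of a A\<^sub>3 x]
  ultimately have "y ^ 4 + 6 * a\<^sup>2 * y\<^sup>2 * A\<^sub>2 + 4 * a ^ 3 * \<bar>y\<bar> * A\<^sub>3 + a ^ 4 * A\<^sub>4
     \<le> (1 - a) * x ^ 4 + (a * x ^ 4 / 4 + 36 * A\<^sub>2\<^sup>2 * a ^ 3)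
        + (a * x ^ 4 / 4 + 4 * A\<^sub>3 * (1 + 16 * A\<^sub>3) * a ^ 3) + a ^ 3 * A\<^sub>4"
    using assms by linarith
  also have "\<dots> \<le> (1 - a / 2) * x ^ 4 + quartic_drift_const A\<^sub>2 A\<^sub>3 A\<^sub>4 * a ^ 3"
    using assms unfolding quartic_drift_const_def by (simp add: algebra_simps)
  finally show ?thesis .
qed

lemma space_nat_filtration [simp]: "space (nat_filtration M X k) = space M"
  unfolding nat_filtration_def by (rule space_measure_of) auto

lemma sets_nat_filtration:
  "sets (nat_filtration M X k) = sigma_sets (space M) (\<Union>i\<in>{..k}. {X i -` B \<inter> space M | B. B \<in> sets borel})"
  unfolding nat_filtration_def by (rule sets_measure_of) auto

lemma subalgebra_nat_filtration:
  assumes "\<And>i. X i \<in> borel_measurable M"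
  shows "subalgebra M (nat_filtration M X k)"
  unfolding subalgebra_def sets_nat_filtration
  by (auto intro!: sets.sigma_sets_subset intro: measurable_sets[OF assms])

lemma sets_nat_filtration_mono:
  "j \<le> k \<Longrightarrow> sets (nat_filtration M X j) \<subseteq> sets (nat_filtration M X k)"
  unfolding sets_nat_filtration by (rule sigma_sets_mono') fastforce

lemma measurable_nat_filtration:
  assumes "i \<le> k"
  shows "X i \<in> borel_measurable (nat_filtration M X k)"
proof (rule measurableI)
  fix B :: "real set" assume "B \<in> sets borel"
  then show "X i -` B \<inter> space (nat_filtration M X k) \<in> sets (nat_filtration M X k)"
    using assms unfolding sets_nat_filtration by auto
qed auto

context sigma_finite_subalgebra
begin

lemma nn_cond_exp_mult_add:
  assumes [measurable]: "c \<in> borel_measurable F" "f \<in> borel_measurable M" "g \<in> borel_measurable M"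
  shows "AE \<omega> in M. nn_cond_exp M F (\<lambda>\<omega>. c \<omega> * f \<omega> + g \<omega>) \<omega> = c \<omega> * nn_cond_exp M F f \<omega> + nn_cond_exp M F g \<omega>"
proof -
  have [measurable]: "c \<in> borel_measurable M" by (rule measurable_from_subalg[OF subalg]) simp
  have "AE \<omega> in M. nn_cond_exp M F (\<lambda>\<omega>. c \<omega> * f \<omega>) \<omega> + nn_cond_exp M F g \<omega>
      = nn_cond_exp M F (\<lambda>\<omega>. c \<omega> * f \<omega> + g \<omega>) \<omega>"
    by (rule nn_cond_exp_sum) measurable
  moreover have "AE \<omega> in M. c \<omega> * nn_cond_exp M F f \<omega> = nn_cond_exp M F (\<lambda>\<omega>. c \<omega> * f \<omega>) \<omega>"
    by (rule nn_cond_exp_prod) measurable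
  ultimately show ?thesis by eventually_elim simp
qed

lemma nn_cond_exp_const:
  "AE \<omega> in M. nn_cond_exp M F (\<lambda>_. c) \<omega> = c"
  using nn_cond_exp_F_meas[of "\<lambda>_. c"] by auto

lemma nn_cond_exp_pos_part_eq_neg_part:
  fixes W :: "'a \<Rightarrow> real"
  assumes [measurable]: "W \<in> borel_measurable M"
    and centred: "AE \<omega> in M. real_cond_exp M F W \<omega> = 0"
    and square: "AE \<omega> in M. nn_cond_exp M F (\<lambda>\<omega>. ennreal ((W \<omega>)\<^sup>2)) \<omega> < \<top>"
  shows "AE \<omega> in M. nn_cond_exp M F (\<lambda>\<omega>. ennreal (W \<omega>)) \<omega> = nn_cond_exp M F (\<lambda>\<omega>. ennreal (- W \<omega>)) \<omega>
     \<and> nn_cond_exp M F (\<lambda>\<omega>. ennreal (W \<omega>)) \<omega> < \<top>"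
proof -
  have le_one_plus_square: "ennreal s \<le> 1 + ennreal (s\<^sup>2)" "ennreal (- s) \<le> 1 + ennreal (s\<^sup>2)" for s :: real
  proof -
    have "\<bar>s\<bar> \<le> 1 + s\<^sup>2"
      using sum_squares_ge_zero[of "\<bar>s\<bar> - 1/2" 0] by (simp add: power2_eq_square algebra_simps)
    then have "ennreal \<bar>s\<bar> \<le> 1 + ennreal (s\<^sup>2)"
      using ennreal_leI[of "\<bar>s\<bar>" "1 + s\<^sup>2"] by simp
    moreover have "ennreal s \<le> ennreal \<bar>s\<bar>" "ennreal (- s) \<le> ennreal \<bar>s\<bar>"
      by (simp_all add: ennreal_leI)
    ultimately show "ennreal s \<le> 1 + ennreal (s\<^sup>2)" "ennreal (- s) \<le> 1 + ennreal (s\<^sup>2)"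
      by (meson order_trans)+
  qed
  have "AE \<omega> in M. nn_cond_exp M F (\<lambda>_. 1) \<omega> + nn_cond_exp M F (\<lambda>\<omega>. ennreal ((W \<omega>)\<^sup>2)) \<omega>
      = nn_cond_exp M F (\<lambda>\<omega>. 1 + ennreal ((W \<omega>)\<^sup>2)) \<omega>"
    by (rule nn_cond_exp_sum) measurable
  with nn_cond_exp_const[of 1] have sum: "AE \<omega> in M.
      nn_cond_exp M F (\<lambda>\<omega>. 1 + ennreal ((W \<omega>)\<^sup>2)) \<omega> = 1 + nn_cond_exp M F (\<lambda>\<omega>. ennreal ((W \<omega>)\<^sup>2)) \<omega>"
    by eventually_elim simp
  have pos: "AE \<omega> in M. nn_cond_exp M F (\<lambda>\<omega>. ennreal (W \<omega>)) \<omega> \<le> nn_cond_exp M F (\<lambda>\<omega>. 1 + ennreal ((W \<omega>)\<^sup>2)) \<omega>"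
    by (rule nn_cond_exp_mono) (simp_all add: le_one_plus_square)
  have neg: "AE \<omega> in M. nn_cond_exp M F (\<lambda>\<omega>. ennreal (- W \<omega>)) \<omega> \<le> nn_cond_exp M F (\<lambda>\<omega>. 1 + ennreal ((W \<omega>)\<^sup>2)) \<omega>"
    by (rule nn_cond_exp_mono) (simp_all add: le_one_plus_square)
  show ?thesis
    using sum pos neg centred square
  proof eventually_elim
    case (elim \<omega>)
    then have "nn_cond_exp M F (\<lambda>\<omega>. 1 + ennreal ((W \<omega>)\<^sup>2)) \<omega> < \<top>"
      by simp
    then have "nn_cond_exp M F (\<lambda>\<omega>. ennreal (W \<omega>)) \<omega> < \<top>" "nn_cond_exp M F (\<lambda>\<omega>. ennreal (- W \<omega>)) \<omega> < \<top>"
      using elim(2,3) by (meson order_le_less_trans)+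
    moreover have "enn2real (nn_cond_exp M F (\<lambda>\<omega>. ennreal (W \<omega>)) \<omega>) = enn2real (nn_cond_exp M F (\<lambda>\<omega>. ennreal (- W \<omega>)) \<omega>)"
      using elim(4) unfolding real_cond_exp_def by simp
    ultimately show ?case by (metis ennreal_enn2real less_top)
  qed
qed

lemma nn_cond_exp_le_plus_centred_mult:
  fixes f g Y W :: "'a \<Rightarrow> real"
  assumes [measurable]: "f \<in> borel_measurable M" "g \<in> borel_measurable M"
      "Y \<in> borel_measurable F" "W \<in> borel_measurable M"
    and centred: "AE \<omega> in M. nn_cond_exp M F (\<lambda>\<omega>. ennreal (W \<omega>)) \<omega> = nn_cond_exp M F (\<lambda>\<omega>. ennreal (- W \<omega>)) \<omega>
       \<and> nn_cond_exp M F (\<lambda>\<omega>. ennreal (W \<omega>)) \<omega> < \<top>"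
    and nonneg: "\<And>\<omega>. \<omega> \<in> space M \<Longrightarrow> 0 \<le> f \<omega>" "\<And>\<omega>. \<omega> \<in> space M \<Longrightarrow> 0 \<le> g \<omega>"
    and le: "\<And>\<omega>. \<omega> \<in> space M \<Longrightarrow> f \<omega> \<le> g \<omega> + Y \<omega> * W \<omega>"
  shows "AE \<omega> in M. nn_cond_exp M F (\<lambda>\<omega>. ennreal (f \<omega>)) \<omega> \<le> nn_cond_exp M F (\<lambda>\<omega>. ennreal (g \<omega>)) \<omega>"
proof -
  have [measurable]: "Y \<in> borel_measurable M" by (rule measurable_from_subalg[OF subalg]) simp
  let ?E = "\<lambda>h. nn_cond_exp M F (\<lambda>\<omega>. ennreal (h \<omega>))"
  let ?L = "\<lambda>\<omega>. ennreal (Y \<omega>) * ennreal (- W \<omega>) + (ennreal (- Y \<omega>) * ennreal (W \<omega>) + ennreal (f \<omega>))"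
  let ?R = "\<lambda>\<omega>. ennreal (Y \<omega>) * ennreal (W \<omega>) + (ennreal (- Y \<omega>) * ennreal (- W \<omega>) + ennreal (g \<omega>))"
  have ennreal_mult_max: "ennreal a * ennreal b = ennreal (max a 0 * max b 0)" for a b :: real
    by (simp add: ennreal_mult ennreal_max_0')
  \<comment> \<open>In \<open>ennreal\<close> the signed term \<open>Y * W\<close> cannot be subtracted; instead its positive and negative
    parts go to opposite sides, and after conditioning the equal finite terms for \<open>W\<^sup>+\<close> and \<open>W\<^sup>-\<close> cancel.\<close>
  have "?L \<omega> \<le> ?R \<omega>" if "\<omega> \<in> space M" for \<omega>
  proof -
    have "Y \<omega> * W \<omega> = max (Y \<omega>) 0 * max (W \<omega>) 0 + max (- Y \<omega>) 0 * max (- W \<omega>) 0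
        - (max (Y \<omega>) 0 * max (- W \<omega>) 0 + max (- Y \<omega>) 0 * max (W \<omega>) 0)"
      by (auto simp: max_def algebra_simps)
    then show ?thesis
      using le[OF that] nonneg[OF that]
      by (simp add: ennreal_mult_max ennreal_plus[symmetric] del: ennreal_plus)
  qed
  then have mono: "AE \<omega> in M. nn_cond_exp M F ?L \<omega> \<le> nn_cond_exp M F ?R \<omega>"
    by (intro nn_cond_exp_mono AE_I2) auto
  have split: "AE \<omega> in M. nn_cond_exp M F (\<lambda>\<omega>. ennreal (Y \<omega>) * u \<omega> + (ennreal (- Y \<omega>) * v \<omega> + h \<omega>)) \<omega>
      = ennreal (Y \<omega>) * nn_cond_exp M F u \<omega> + (ennreal (- Y \<omega>) * nn_cond_exp M F v \<omega> + nn_cond_exp M F h \<omega>)"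
    if [measurable]: "u \<in> borel_measurable M" "v \<in> borel_measurable M" "h \<in> borel_measurable M" for u v h
  proof -
    have "AE \<omega> in M. nn_cond_exp M F (\<lambda>\<omega>. ennreal (Y \<omega>) * u \<omega> + (ennreal (- Y \<omega>) * v \<omega> + h \<omega>)) \<omega>
        = ennreal (Y \<omega>) * nn_cond_exp M F u \<omega> + nn_cond_exp M F (\<lambda>\<omega>. ennreal (- Y \<omega>) * v \<omega> + h \<omega>) \<omega>"
      by (rule nn_cond_exp_mult_add) measurable
    moreover have "AE \<omega> in M. nn_cond_exp M F (\<lambda>\<omega>. ennreal (- Y \<omega>) * v \<omega> + h \<omega>) \<omega>
        = ennreal (- Y \<omega>) * nn_cond_exp M F v \<omega> + nn_cond_exp M F h \<omega>"
      by (rule nn_cond_exp_mult_add) measurable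
    ultimately show ?thesis by eventually_elim simp
  qed
  have "AE \<omega> in M. nn_cond_exp M F ?L \<omega> = ennreal (Y \<omega>) * ?E (\<lambda>\<omega>. - W \<omega>) \<omega> + (ennreal (- Y \<omega>) * ?E W \<omega> + ?E f \<omega>)"
    by (rule split) measurable
  moreover have "AE \<omega> in M. nn_cond_exp M F ?R \<omega> = ennreal (Y \<omega>) * ?E W \<omega> + (ennreal (- Y \<omega>) * ?E (\<lambda>\<omega>. - W \<omega>) \<omega> + ?E g \<omega>)"
    by (rule split) measurable
  ultimately show ?thesis
    using mono centred
  proof eventually_elim
    case (elim \<omega>)
    define t where "t = ennreal (Y \<omega>) * ?E W \<omega> + ennreal (- Y \<omega>) * ?E W \<omega>"
    have "t < \<top>" using elim(4) by (auto simp: t_def ennreal_mult_less_top)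
    moreover have "t + ?E f \<omega> \<le> t + ?E g \<omega>"
      using elim by (simp add: t_def add.assoc)
    ultimately show ?case by (auto simp: ennreal_add_left_cancel_le)
  qed
qed

lemma nn_cond_exp_quartic_remainder_le:
  fixes Y W :: "'a \<Rightarrow> real" and a A\<^sub>2 A\<^sub>3 A\<^sub>4 :: real
  assumes [measurable]: "Y \<in> borel_measurable F" "W \<in> borel_measurable M"
    and a: "0 \<le> a" and A: "0 \<le> A\<^sub>2" "0 \<le> A\<^sub>3" "0 \<le> A\<^sub>4"
    and mom2: "AE \<omega> in M. nn_cond_exp M F (\<lambda>\<omega>. ennreal ((W \<omega>)\<^sup>2)) \<omega> \<le> ennreal A\<^sub>2"
    and mom3: "AE \<omega> in M. nn_cond_exp M F (\<lambda>\<omega>. ennreal (\<bar>W \<omega>\<bar> ^ 3)) \<omega> \<le> ennreal A\<^sub>3"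
    and mom4: "AE \<omega> in M. nn_cond_exp M F (\<lambda>\<omega>. ennreal (W \<omega> ^ 4)) \<omega> \<le> ennreal A\<^sub>4"
  shows "AE \<omega> in M. nn_cond_exp M F (\<lambda>\<omega>. ennreal (Y \<omega> ^ 4 + 6 * a\<^sup>2 * (Y \<omega>)\<^sup>2 * (W \<omega>)\<^sup>2
      + 4 * a ^ 3 * \<bar>Y \<omega>\<bar> * \<bar>W \<omega>\<bar> ^ 3 + a ^ 4 * W \<omega> ^ 4)) \<omega>
    \<le> ennreal (Y \<omega> ^ 4 + 6 * a\<^sup>2 * (Y \<omega>)\<^sup>2 * A\<^sub>2 + 4 * a ^ 3 * \<bar>Y \<omega>\<bar> * A\<^sub>3 + a ^ 4 * A\<^sub>4)"
proof -
  have [measurable]: "Y \<in> borel_measurable M" by (rule measurable_from_subalg[OF subalg]) simp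
  let ?c\<^sub>2 = "\<lambda>\<omega>. ennreal (6 * a\<^sup>2 * (Y \<omega>)\<^sup>2)" and ?c\<^sub>3 = "\<lambda>\<omega>. ennreal (4 * a ^ 3 * \<bar>Y \<omega>\<bar>)"
    and ?c\<^sub>4 = "\<lambda>\<omega>. ennreal (a ^ 4)" and ?y = "\<lambda>\<omega>. ennreal (Y \<omega> ^ 4)"
  let ?E = "\<lambda>f. nn_cond_exp M F (\<lambda>\<omega>. ennreal (f \<omega>))"
  have ennreal_sum: "(\<lambda>\<omega>. ennreal (Y \<omega> ^ 4 + 6 * a\<^sup>2 * (Y \<omega>)\<^sup>2 * (W \<omega>)\<^sup>2 + 4 * a ^ 3 * \<bar>Y \<omega>\<bar> * \<bar>W \<omega>\<bar> ^ 3 + a ^ 4 * W \<omega> ^ 4))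
      = (\<lambda>\<omega>. ?c\<^sub>2 \<omega> * ennreal ((W \<omega>)\<^sup>2) + (?c\<^sub>3 \<omega> * ennreal (\<bar>W \<omega>\<bar> ^ 3) + (?c\<^sub>4 \<omega> * ennreal (W \<omega> ^ 4) + ?y \<omega>)))"
    using a by (simp add: ennreal_mult[symmetric] ennreal_plus[symmetric] add_ac del: ennreal_plus)
  have "AE \<omega> in M. nn_cond_exp M F ?y \<omega> = ?y \<omega>"
    using nn_cond_exp_F_meas[of ?y] by (auto elim!: eventually_mono)
  moreover have "AE \<omega> in M. nn_cond_exp M F (\<lambda>\<omega>. ?c\<^sub>4 \<omega> * ennreal (W \<omega> ^ 4) + ?y \<omega>) \<omega>
      = ?c\<^sub>4 \<omega> * ?E (\<lambda>\<omega>. W \<omega> ^ 4) \<omega> + nn_cond_exp M F ?y \<omega>"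
    by (rule nn_cond_exp_mult_add) measurable
  moreover have "AE \<omega> in M. nn_cond_exp M F (\<lambda>\<omega>. ?c\<^sub>3 \<omega> * ennreal (\<bar>W \<omega>\<bar> ^ 3) + (?c\<^sub>4 \<omega> * ennreal (W \<omega> ^ 4) + ?y \<omega>)) \<omega>
      = ?c\<^sub>3 \<omega> * ?E (\<lambda>\<omega>. \<bar>W \<omega>\<bar> ^ 3) \<omega> + nn_cond_exp M F (\<lambda>\<omega>. ?c\<^sub>4 \<omega> * ennreal (W \<omega> ^ 4) + ?y \<omega>) \<omega>"
    by (rule nn_cond_exp_mult_add) measurable
  moreover have "AE \<omega> in M. nn_cond_exp M F (\<lambda>\<omega>. ?c\<^sub>2 \<omega> * ennreal ((W \<omega>)\<^sup>2)
        + (?c\<^sub>3 \<omega> * ennreal (\<bar>W \<omega>\<bar> ^ 3) + (?c\<^sub>4 \<omega> * ennreal (W \<omega> ^ 4) + ?y \<omega>))) \<omega>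
      = ?c\<^sub>2 \<omega> * ?E (\<lambda>\<omega>. (W \<omega>)\<^sup>2) \<omega>
        + nn_cond_exp M F (\<lambda>\<omega>. ?c\<^sub>3 \<omega> * ennreal (\<bar>W \<omega>\<bar> ^ 3) + (?c\<^sub>4 \<omega> * ennreal (W \<omega> ^ 4) + ?y \<omega>)) \<omega>"
    by (rule nn_cond_exp_mult_add) measurable
  ultimately show ?thesis
    using mom2 mom3 mom4 unfolding ennreal_sum
  proof eventually_elim
    case (elim \<omega>)
    then have "nn_cond_exp M F (\<lambda>\<omega>. ?c\<^sub>2 \<omega> * ennreal ((W \<omega>)\<^sup>2)
        + (?c\<^sub>3 \<omega> * ennreal (\<bar>W \<omega>\<bar> ^ 3) + (?c\<^sub>4 \<omega> * ennreal (W \<omega> ^ 4) + ?y \<omega>))) \<omega>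
      \<le> ?c\<^sub>2 \<omega> * ennreal A\<^sub>2 + (?c\<^sub>3 \<omega> * ennreal A\<^sub>3 + (?c\<^sub>4 \<omega> * ennreal A\<^sub>4 + ?y \<omega>))"
      by (simp add: add_mono mult_left_mono)
    also have "\<dots> = ennreal (Y \<omega> ^ 4 + 6 * a\<^sup>2 * (Y \<omega>)\<^sup>2 * A\<^sub>2 + 4 * a ^ 3 * \<bar>Y \<omega>\<bar> * A\<^sub>3 + a ^ 4 * A\<^sub>4)"
      using a A by (simp add: ennreal_mult[symmetric] ennreal_plus[symmetric] add_ac del: ennreal_plus)
    finally show ?case .
  qed
qed

lemma nn_cond_exp_quartic_relaxation:
  fixes X X' W :: "'a \<Rightarrow> real" and a A\<^sub>2 A\<^sub>3 A\<^sub>4 :: real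
  assumes [measurable]: "X \<in> borel_measurable F" "X' \<in> borel_measurable M" "W \<in> borel_measurable M"
    and a: "0 \<le> a" "a \<le> 1"
    and A: "0 \<le> A\<^sub>2" "0 \<le> A\<^sub>3" "0 \<le> A\<^sub>4"
    and step: "\<And>\<omega>. \<omega> \<in> space M \<Longrightarrow> X' \<omega> = (1 - a) * X \<omega> + a * W \<omega>"
    and centred: "AE \<omega> in M. real_cond_exp M F W \<omega> = 0"
    and mom2: "AE \<omega> in M. nn_cond_exp M F (\<lambda>\<omega>. ennreal ((W \<omega>)\<^sup>2)) \<omega> \<le> ennreal A\<^sub>2"
    and mom3: "AE \<omega> in M. nn_cond_exp M F (\<lambda>\<omega>. ennreal (\<bar>W \<omega>\<bar> ^ 3)) \<omega> \<le> ennreal A\<^sub>3"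
    and mom4: "AE \<omega> in M. nn_cond_exp M F (\<lambda>\<omega>. ennreal (W \<omega> ^ 4)) \<omega> \<le> ennreal A\<^sub>4"
  shows "AE \<omega> in M. nn_cond_exp M F (\<lambda>\<omega>. ennreal (X' \<omega> ^ 4)) \<omega>
    \<le> ennreal ((1 - a / 2) * X \<omega> ^ 4 + quartic_drift_const A\<^sub>2 A\<^sub>3 A\<^sub>4 * a ^ 3)"
proof -
  define y where "y \<omega> = (1 - a) * X \<omega>" for \<omega>
  define g where "g \<omega> = y \<omega> ^ 4 + 6 * a\<^sup>2 * (y \<omega>)\<^sup>2 * (W \<omega>)\<^sup>2 + 4 * a ^ 3 * \<bar>y \<omega>\<bar> * \<bar>W \<omega>\<bar> ^ 3 + a ^ 4 * W \<omega> ^ 4" for \<omega>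
  have [measurable]: "y \<in> borel_measurable F" unfolding y_def by measurable
  then have [measurable]: "y \<in> borel_measurable M" by (rule measurable_from_subalg[OF subalg])
  have [measurable]: "g \<in> borel_measurable M" unfolding g_def by measurable
  have "AE \<omega> in M. nn_cond_exp M F (\<lambda>\<omega>. ennreal ((W \<omega>)\<^sup>2)) \<omega> < \<top>"
    using mom2 by eventually_elim (simp add: le_less_trans)
  with centred have W_parts: "AE \<omega> in M. nn_cond_exp M F (\<lambda>\<omega>. ennreal (W \<omega>)) \<omega> = nn_cond_exp M F (\<lambda>\<omega>. ennreal (- W \<omega>)) \<omega>
     \<and> nn_cond_exp M F (\<lambda>\<omega>. ennreal (W \<omega>)) \<omega> < \<top>"
    by (intro nn_cond_exp_pos_part_eq_neg_part) auto
  have "AE \<omega> in M. nn_cond_exp M F (\<lambda>\<omega>. ennreal (X' \<omega> ^ 4)) \<omega> \<le> nn_cond_exp M F (\<lambda>\<omega>. ennreal (g \<omega>)) \<omega>"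
  proof (rule nn_cond_exp_le_plus_centred_mult[where Y = "\<lambda>\<omega>. 4 * a * y \<omega> ^ 3"])
    show "X' \<omega> ^ 4 \<le> g \<omega> + 4 * a * y \<omega> ^ 3 * W \<omega>" if "\<omega> \<in> space M" for \<omega>
    proof -
      have "X' \<omega> = y \<omega> + a * W \<omega>" using step[OF that] by (simp add: y_def)
      then show ?thesis
        using quartic_expansion_le[OF a(1), of "y \<omega>" "W \<omega>"] by (simp add: g_def algebra_simps)
    qed
    show "0 \<le> g \<omega>" for \<omega> using a by (simp add: g_def)
  qed (use W_parts in auto)
  moreover have "AE \<omega> in M. nn_cond_exp M F (\<lambda>\<omega>. ennreal (g \<omega>)) \<omega>
      \<le> ennreal (y \<omega> ^ 4 + 6 * a\<^sup>2 * (y \<omega>)\<^sup>2 * A\<^sub>2 + 4 * a ^ 3 * \<bar>y \<omega>\<bar> * A\<^sub>3 + a ^ 4 * A\<^sub>4)"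
    unfolding g_def by (rule nn_cond_exp_quartic_remainder_le[OF _ _ a(1) A mom2 mom3 mom4]) measurable
  ultimately show ?thesis
  proof eventually_elim
    case (elim \<omega>)
    then show ?case
      using quartic_moment_bound[OF a A, of "X \<omega>"] by (auto simp: y_def intro: order_trans ennreal_leI)
  qed
qed

end

lemma frequently_small_of_nonsummable_descent:
  fixes u v a :: "nat \<Rightarrow> real"
  assumes u_nonneg: "\<And>k. 0 \<le> u k" and a_nonneg: "\<And>k. 0 \<le> a k"
    and descent: "\<And>k. u (Suc k) \<le> u k - a k * v k"
    and "\<not> summable a" and "0 < \<epsilon>"
  shows "\<exists>k\<ge>K. v k < \<epsilon>"
proof (rule ccontr)
  assume "\<not> ?thesis"
  then have large: "\<epsilon> \<le> v k" if "K \<le> k" for k using that by (auto simp: not_less)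
  have partial: "\<epsilon> * (\<Sum>i<n. a (i + K)) \<le> u K - u (n + K)" for n
  proof (induction n)
    case (Suc n)
    have "\<epsilon> * a (n + K) \<le> a (n + K) * v (n + K)"
      using mult_right_mono[OF large a_nonneg] by (simp add: mult.commute)
    then show ?case using Suc descent[of "n + K"] by (simp add: algebra_simps)
  qed simp
  have bounded: "(\<Sum>i<n. a (i + K)) \<le> u K / \<epsilon>" for n
  proof -
    have "\<epsilon> * (\<Sum>i<n. a (i + K)) \<le> u K" using partial[of n] u_nonneg[of "n + K"] by linarith
    then show ?thesis using \<open>0 < \<epsilon>\<close> by (simp add: field_simps)
  qed
  have "summable (\<lambda>i. a (i + K))"
    by (rule summableI_nonneg_bounded[where x = "u K / \<epsilon>"]) (use a_nonneg bounded in auto)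
  with \<open>\<not> summable a\<close> show False by (simp add: summable_iff_shift)
qed

lemma (in sigma_finite_subalgebra) set_nn_integral_le_of_nn_cond_exp_le:
  assumes "A \<in> sets F" "f \<in> borel_measurable M"
    and "AE \<omega> in M. nn_cond_exp M F f \<omega> \<le> g \<omega>"
  shows "(\<integral>\<^sup>+\<omega>\<in>A. f \<omega> \<partial>M) \<le> (\<integral>\<^sup>+\<omega>\<in>A. g \<omega> \<partial>M)"
proof -
  have "(\<integral>\<^sup>+\<omega>\<in>A. f \<omega> \<partial>M) = (\<integral>\<^sup>+\<omega>. indicator A \<omega> * nn_cond_exp M F f \<omega> \<partial>M)"
    using assms by (subst nn_cond_exp_intg) (auto simp: mult.commute)
  also have "\<dots> \<le> (\<integral>\<^sup>+\<omega>\<in>A. g \<omega> \<partial>M)"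
    using assms(3) by (intro nn_integral_mono_AE) (auto elim!: eventually_mono split: split_indicator)
  finally show ?thesis .
qed

lemma set_nn_integral_Markov_inequality:
  fixes f :: "'a \<Rightarrow> real"
  assumes [measurable]: "A \<in> sets M" "f \<in> borel_measurable M"
  shows "ennreal c * emeasure M (A \<inter> {\<omega>\<in>space M. c \<le> f \<omega>})
    \<le> (\<integral>\<^sup>+\<omega>\<in>A \<inter> {\<omega>\<in>space M. c \<le> f \<omega>}. ennreal (f \<omega>) \<partial>M)"
  by (subst nn_integral_cmult_indicator[symmetric])
    (measurable, auto intro!: nn_integral_mono ennreal_leI split: split_indicator)

lemma exceedance_Suc_subset:
  fixes U :: "nat \<Rightarrow> 'a \<Rightarrow> real"
  shows "{\<omega>\<in>\<Omega>. \<exists>j\<in>{k..k + Suc n}. c \<le> U j \<omega>}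
    \<subseteq> {\<omega>\<in>\<Omega>. c \<le> U k \<omega>} \<union> {\<omega>\<in>\<Omega>. U k \<omega> < c \<and> (\<exists>j\<in>{Suc k..Suc k + n}. c \<le> U j \<omega>)}"
proof
  fix \<omega> assume "\<omega> \<in> {\<omega>\<in>\<Omega>. \<exists>j\<in>{k..k + Suc n}. c \<le> U j \<omega>}"
  then obtain j where "\<omega> \<in> \<Omega>" "j \<in> {k..k + Suc n}" "c \<le> U j \<omega>" by blast
  moreover have "j \<in> {Suc k..Suc k + n}" if "\<not> c \<le> U k \<omega>"
    using that \<open>j \<in> {k..k + Suc n}\<close> \<open>c \<le> U j \<omega>\<close> by (cases "j = k") auto
  ultimately show "\<omega> \<in> {\<omega>\<in>\<Omega>. c \<le> U k \<omega>} \<union> {\<omega>\<in>\<Omega>. U k \<omega> < c \<and> (\<exists>j\<in>{Suc k..Suc k + n}. c \<le> U j \<omega>)}"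
    by (auto simp: not_le)
qed

locale nat_filtered_prob_space = prob_space M for M :: "'a measure" +
  fixes F :: "nat \<Rightarrow> 'a measure"
  assumes subalgebra_F: "\<And>k. subalgebra M (F k)"
    and sets_F_mono: "\<And>k l. k \<le> l \<Longrightarrow> sets (F k) \<subseteq> sets (F l)"
begin

lemma sigma_finite_subalgebra_F: "sigma_finite_subalgebra M (F k)"
  by (intro finite_measure_subalgebra_is_sigma_finite finite_measure_subalgebra.intro
      finite_measure_subalgebra_axioms.intro subalgebra_F finite_measure_axioms)

lemma sets_F_subset: "A \<in> sets (F k) \<Longrightarrow> A \<in> sets M"
  using subalgebra_F[of k] by (auto simp: subalgebra_def)

lemma space_F [simp]: "space (F k) = space M"
  using subalgebra_F[of k] by (simp add: subalgebra_def)

lemma measurable_from_F: "f \<in> measurable (F k) N \<Longrightarrow> f \<in> measurable M N"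
  by (rule measurable_from_subalg[OF subalgebra_F])

lemma maximal_inequality_upto:
  fixes U :: "nat \<Rightarrow> 'a \<Rightarrow> real"
  assumes adapted: "\<And>k. U k \<in> borel_measurable (F k)"
    and supermartingale: "\<And>k A. A \<in> sets (F k) \<Longrightarrow>
      (\<integral>\<^sup>+\<omega>\<in>A. ennreal (U (Suc k) \<omega>) \<partial>M) \<le> (\<integral>\<^sup>+\<omega>\<in>A. ennreal (U k \<omega>) \<partial>M)"
  shows "A \<in> sets (F k) \<Longrightarrow> ennreal c * emeasure M (A \<inter> {\<omega>\<in>space M. \<exists>j\<in>{k..k + n}. c \<le> U j \<omega>})
    \<le> (\<integral>\<^sup>+\<omega>\<in>A. ennreal (U k \<omega>) \<partial>M)"
proof (induction n arbitrary: k A)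
  case 0
  have "A \<in> sets M" using 0 by (rule sets_F_subset)
  from set_nn_integral_Markov_inequality[OF this measurable_from_F[OF adapted]]
  have "ennreal c * emeasure M (A \<inter> {\<omega>\<in>space M. c \<le> U k \<omega>}) \<le> (\<integral>\<^sup>+\<omega>\<in>A. ennreal (U k \<omega>) \<partial>M)"
    using nn_set_integral_set_mono[OF Int_lower1] by (rule order_trans)
  moreover have "A \<inter> {\<omega>\<in>space M. \<exists>j\<in>{k..k + 0}. c \<le> U j \<omega>} = A \<inter> {\<omega>\<in>space M. c \<le> U k \<omega>}"
    by auto
  ultimately show ?case by simp
next
  case (Suc n)
  have [measurable]: "A \<in> sets M" using Suc.prems by (rule sets_F_subset)
  have [measurable]: "U j \<in> borel_measurable M" for j by (rule measurable_from_F[OF adapted])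
  define A\<^sub>1 where "A\<^sub>1 = A \<inter> {\<omega>\<in>space M. c \<le> U k \<omega>}"
  define A\<^sub>2 where "A\<^sub>2 = A \<inter> {\<omega>\<in>space M. U k \<omega> < c}"
  define S where "S = A\<^sub>2 \<inter> {\<omega>\<in>space M. \<exists>j\<in>{Suc k..Suc k + n}. c \<le> U j \<omega>}"
  have "{\<omega>\<in>space (F k). U k \<omega> < c} \<in> sets (F k)" using adapted[of k] by measurable
  then have A\<^sub>2_F: "A\<^sub>2 \<in> sets (F k)" using Suc.prems by (auto simp: A\<^sub>2_def)
  then have [measurable]: "A\<^sub>2 \<in> sets M" by (rule sets_F_subset)
  have [measurable]: "A\<^sub>1 \<in> sets M" "S \<in> sets M" unfolding A\<^sub>1_def S_def by measurable
  have "A \<inter> {\<omega>\<in>space M. \<exists>j\<in>{k..k + Suc n}. c \<le> U j \<omega>} \<subseteq> A\<^sub>1 \<union> S"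
    using exceedance_Suc_subset[of "space M" k n c U] unfolding A\<^sub>1_def A\<^sub>2_def S_def by blast
  then have "emeasure M (A \<inter> {\<omega>\<in>space M. \<exists>j\<in>{k..k + Suc n}. c \<le> U j \<omega>}) \<le> emeasure M (A\<^sub>1 \<union> S)"
    by (rule emeasure_mono) measurable
  also have "\<dots> \<le> emeasure M A\<^sub>1 + emeasure M S"
    by (rule emeasure_subadditive) measurable
  finally have "ennreal c * emeasure M (A \<inter> {\<omega>\<in>space M. \<exists>j\<in>{k..k + Suc n}. c \<le> U j \<omega>})
      \<le> ennreal c * (emeasure M A\<^sub>1 + emeasure M S)"
    by (rule mult_left_mono) simp
  also have "\<dots> = ennreal c * emeasure M A\<^sub>1 + ennreal c * emeasure M S"
    by (rule distrib_left)
  also have "\<dots> \<le> (\<integral>\<^sup>+\<omega>\<in>A\<^sub>1. ennreal (U k \<omega>) \<partial>M) + (\<integral>\<^sup>+\<omega>\<in>A\<^sub>2. ennreal (U k \<omega>) \<partial>M)"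
  proof (rule add_mono)
    show "ennreal c * emeasure M A\<^sub>1 \<le> (\<integral>\<^sup>+\<omega>\<in>A\<^sub>1. ennreal (U k \<omega>) \<partial>M)"
      unfolding A\<^sub>1_def by (rule set_nn_integral_Markov_inequality) measurable
    have "A\<^sub>2 \<in> sets (F (Suc k))" using A\<^sub>2_F sets_F_mono[of k "Suc k"] by auto
    from Suc.IH[OF this] supermartingale[OF A\<^sub>2_F]
    show "ennreal c * emeasure M S \<le> (\<integral>\<^sup>+\<omega>\<in>A\<^sub>2. ennreal (U k \<omega>) \<partial>M)"
      unfolding S_def by (rule order_trans)
  qed
  also have "\<dots> = (\<integral>\<^sup>+\<omega>\<in>A\<^sub>1 \<union> A\<^sub>2. ennreal (U k \<omega>) \<partial>M)"
    by (rule nn_integral_disjoint_pair[symmetric]) (auto simp: A\<^sub>1_def A\<^sub>2_def)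
  also have "A\<^sub>1 \<union> A\<^sub>2 = A"
    using sets.sets_into_space[OF \<open>A \<in> sets M\<close>] by (auto simp: A\<^sub>1_def A\<^sub>2_def)
  finally show ?case .
qed

lemma maximal_inequality:
  fixes U :: "nat \<Rightarrow> 'a \<Rightarrow> real"
  assumes adapted: "\<And>k. U k \<in> borel_measurable (F k)"
    and supermartingale: "\<And>k A. A \<in> sets (F k) \<Longrightarrow>
      (\<integral>\<^sup>+\<omega>\<in>A. ennreal (U (Suc k) \<omega>) \<partial>M) \<le> (\<integral>\<^sup>+\<omega>\<in>A. ennreal (U k \<omega>) \<partial>M)"
    and A: "A \<in> sets (F k)"
  shows "ennreal c * emeasure M (A \<inter> {\<omega>\<in>space M. \<exists>j\<ge>k. c \<le> U j \<omega>}) \<le> (\<integral>\<^sup>+\<omega>\<in>A. ennreal (U k \<omega>) \<partial>M)"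
proof -
  have [measurable]: "A \<in> sets M" using A by (rule sets_F_subset)
  have [measurable]: "U j \<in> borel_measurable M" for j by (rule measurable_from_F[OF adapted])
  define S where "S n = A \<inter> {\<omega>\<in>space M. \<exists>j\<in>{k..k + n}. c \<le> U j \<omega>}" for n
  have "S n \<in> sets M" for n unfolding S_def by measurable
  then have S_sets: "range S \<subseteq> sets M" by auto
  have "incseq S" unfolding S_def by (rule incseq_SucI) force
  have "\<omega> \<in> (\<Union>n. S n)" if "\<omega> \<in> A" "\<omega> \<in> space M" "k \<le> j" "c \<le> U j \<omega>" for \<omega> j
    using that by (auto simp: S_def intro!: exI[of _ "j - k"] bexI[of _ j])
  then have "A \<inter> {\<omega>\<in>space M. \<exists>j\<ge>k. c \<le> U j \<omega>} = (\<Union>n. S n)"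
    by (auto simp: S_def)
  then have "ennreal c * emeasure M (A \<inter> {\<omega>\<in>space M. \<exists>j\<ge>k. c \<le> U j \<omega>}) = (SUP n. ennreal c * emeasure M (S n))"
    using SUP_emeasure_incseq[OF S_sets \<open>incseq S\<close>] by (simp add: SUP_mult_left_ennreal[symmetric])
  also have "\<dots> \<le> (\<integral>\<^sup>+\<omega>\<in>A. ennreal (U k \<omega>) \<partial>M)"
    unfolding S_def using maximal_inequality_upto[OF adapted supermartingale A] by (rule SUP_least)
  finally show ?thesis .
qed

end

locale drift_process = nat_filtered_prob_space +
  fixes V :: "nat \<Rightarrow> 'a \<Rightarrow> real" and a b :: "nat \<Rightarrow> real"
  assumes V_adapted: "\<And>k. V k \<in> borel_measurable (F k)"
    and V_nonneg: "\<And>k \<omega>. 0 \<le> V k \<omega>"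
    and a_nonneg: "\<And>k. 0 \<le> a k" and a_le_1: "\<And>k. a k \<le> 1"
    and b_nonneg: "\<And>k. 0 \<le> b k" and summable_b: "summable b"
    and drift: "\<And>k. AE \<omega> in M. nn_cond_exp M (F k) (\<lambda>\<omega>. ennreal (V (Suc k) \<omega>)) \<omega>
      \<le> ennreal ((1 - a k) * V k \<omega> + b k)"
begin

definition tail :: "nat \<Rightarrow> real" where
  "tail k = (\<Sum>j. b (j + k))"

lemma tail_nonneg: "0 \<le> tail k"
  unfolding tail_def using b_nonneg by (intro suminf_nonneg summable_ignore_initial_segment[OF summable_b])

lemma tail_Suc: "tail k = b k + tail (Suc k)"
  using suminf_split_head[OF summable_ignore_initial_segment[OF summable_b, of k]] by (simp add: tail_def)

lemma eventually_tail_less: "0 < e \<Longrightarrow> \<exists>K. \<forall>k\<ge>K. tail k < e"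
  using suminf_exist_split[OF _ summable_b, of e] tail_nonneg unfolding tail_def by auto

lemma V_measurable [measurable]: "V k \<in> borel_measurable M"
  by (rule measurable_from_F[OF V_adapted])

lemma set_nn_integral_V_Suc_le:
  assumes "A \<in> sets (F k)"
  shows "(\<integral>\<^sup>+\<omega>\<in>A. ennreal (V (Suc k) \<omega>) \<partial>M) \<le> (\<integral>\<^sup>+\<omega>\<in>A. ennreal ((1 - a k) * V k \<omega> + b k) \<partial>M)"
  by (rule sigma_finite_subalgebra.set_nn_integral_le_of_nn_cond_exp_le[OF sigma_finite_subalgebra_F assms _ drift])
    measurable

lemma supermartingale_V_plus_tail:
  assumes A: "A \<in> sets (F k)"
  shows "(\<integral>\<^sup>+\<omega>\<in>A. ennreal (V (Suc k) \<omega> + tail (Suc k)) \<partial>M) \<le> (\<integral>\<^sup>+\<omega>\<in>A. ennreal (V k \<omega> + tail k) \<partial>M)"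
proof -
  have [measurable]: "A \<in> sets M" using A by (rule sets_F_subset)
  have "(\<integral>\<^sup>+\<omega>\<in>A. ennreal (V (Suc k) \<omega> + tail (Suc k)) \<partial>M)
      = (\<integral>\<^sup>+\<omega>\<in>A. ennreal (V (Suc k) \<omega>) \<partial>M) + (\<integral>\<^sup>+\<omega>\<in>A. ennreal (tail (Suc k)) \<partial>M)"
    using V_nonneg tail_nonneg by (simp add: nn_set_integral_add)
  also have "\<dots> \<le> (\<integral>\<^sup>+\<omega>\<in>A. ennreal ((1 - a k) * V k \<omega> + b k) \<partial>M) + (\<integral>\<^sup>+\<omega>\<in>A. ennreal (tail (Suc k)) \<partial>M)"
    using set_nn_integral_V_Suc_le[OF A] by (rule add_right_mono)
  also have "\<dots> = (\<integral>\<^sup>+\<omega>\<in>A. ennreal ((1 - a k) * V k \<omega> + b k + tail (Suc k)) \<partial>M)"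
    using V_nonneg a_le_1 b_nonneg tail_nonneg by (simp add: nn_set_integral_add)
  also have "\<dots> \<le> (\<integral>\<^sup>+\<omega>\<in>A. ennreal (V k \<omega> + tail k) \<partial>M)"
  proof (intro nn_integral_mono mult_right_mono ennreal_leI)
    fix \<omega>
    show "(1 - a k) * V k \<omega> + b k + tail (Suc k) \<le> V k \<omega> + tail k"
      using mult_left_mono[OF a_nonneg V_nonneg] tail_Suc[of k] by (simp add: algebra_simps)
  qed simp
  finally show ?thesis .
qed

lemma set_nn_integral_V_Suc_le_affine:
  assumes B: "B \<in> sets (F k)"
  shows "(\<integral>\<^sup>+\<omega>\<in>B. ennreal (V (Suc k) \<omega>) \<partial>M) \<le> ennreal (1 - a k) * (\<integral>\<^sup>+\<omega>\<in>B. ennreal (V k \<omega>) \<partial>M) + ennreal (b k)"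
proof -
  have [measurable]: "B \<in> sets M" using B by (rule sets_F_subset)
  have "(\<integral>\<^sup>+\<omega>\<in>B. ennreal (V (Suc k) \<omega>) \<partial>M) \<le> (\<integral>\<^sup>+\<omega>\<in>B. ennreal ((1 - a k) * V k \<omega> + b k) \<partial>M)"
    by (rule set_nn_integral_V_Suc_le[OF B])
  also have "\<dots> \<le> (\<integral>\<^sup>+\<omega>. ennreal (1 - a k) * (ennreal (V k \<omega>) * indicator B \<omega>) + ennreal (b k) \<partial>M)"
    using a_le_1 V_nonneg b_nonneg
    by (intro nn_integral_mono) (auto simp: ennreal_mult split: split_indicator)
  also have "\<dots> = ennreal (1 - a k) * (\<integral>\<^sup>+\<omega>\<in>B. ennreal (V k \<omega>) \<partial>M) + ennreal (b k)"
    by (simp add: nn_integral_add nn_integral_cmult emeasure_space_1)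
  finally show ?thesis .
qed

lemma frequently_small_set_nn_integral:
  assumes "\<not> summable a" and B: "B \<in> sets (F 0)" and finite: "(\<integral>\<^sup>+\<omega>\<in>B. ennreal (V 0 \<omega>) \<partial>M) < \<top>"
    and "0 < e"
  shows "\<exists>k\<ge>K. (\<integral>\<^sup>+\<omega>\<in>B. ennreal (V k \<omega>) \<partial>M) < ennreal e"
proof -
  define I where "I k = (\<integral>\<^sup>+\<omega>\<in>B. ennreal (V k \<omega>) \<partial>M)" for k
  have I_Suc: "I (Suc k) \<le> ennreal (1 - a k) * I k + ennreal (b k)" for k
    unfolding I_def using B sets_F_mono[of 0 k] by (intro set_nn_integral_V_Suc_le_affine) auto
  define v where "v k = enn2real (I k)" for k
  have I_eq: "I k = ennreal (v k)" for k
  proof (induction k)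
    case 0
    then show ?case using finite by (simp add: v_def I_def less_top)
  next
    case (Suc k)
    have "ennreal (1 - a k) * I k + ennreal (b k) < \<top>"
      using Suc by (simp add: ennreal_mult_less_top)
    with I_Suc[of k] have "I (Suc k) < \<top>" by (rule le_less_trans)
    then show ?case by (simp add: v_def less_top)
  qed
  have v_nonneg: "0 \<le> v k" for k by (simp add: v_def)
  have "v (Suc k) \<le> (1 - a k) * v k + b k" for k
  proof -
    have "ennreal (v (Suc k)) \<le> ennreal ((1 - a k) * v k + b k)"
      using I_Suc[of k] a_le_1[of k] b_nonneg[of k] v_nonneg[of k] by (simp add: I_eq ennreal_mult ennreal_plus)
    then show ?thesis using a_le_1[of k] b_nonneg[of k] v_nonneg[of k] by (simp del: ennreal_plus)
  qed
  then have "v (Suc k) + tail (Suc k) \<le> v k + tail k - a k * v k" for k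
    using tail_Suc[of k] by (simp add: algebra_simps)
  moreover have "0 \<le> v k + tail k" for k using tail_nonneg[of k] v_nonneg[of k] by simp
  ultimately obtain k where "k \<ge> K" "v k < e"
    using frequently_small_of_nonsummable_descent[of "\<lambda>k. v k + tail k" a v, OF _ a_nonneg _ assms(1) \<open>0 < e\<close>]
    by blast
  then have "I k < ennreal e" using \<open>0 < e\<close> by (simp add: I_eq ennreal_lessI)
  with \<open>k \<ge> K\<close> show ?thesis unfolding I_def by blast
qed

lemma maximal_inequality_V_plus_tail:
  assumes B: "B \<in> sets (F k)"
  shows "ennreal c * emeasure M (B \<inter> {\<omega>\<in>space M. \<exists>j\<ge>k. c \<le> V j \<omega> + tail j})
    \<le> (\<integral>\<^sup>+\<omega>\<in>B. ennreal (V k \<omega>) \<partial>M) + ennreal (tail k)"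
proof -
  have [measurable]: "B \<in> sets M" using B by (rule sets_F_subset)
  have "ennreal c * emeasure M (B \<inter> {\<omega>\<in>space M. \<exists>j\<ge>k. c \<le> V j \<omega> + tail j})
      \<le> (\<integral>\<^sup>+\<omega>\<in>B. ennreal (V k \<omega> + tail k) \<partial>M)"
    by (rule maximal_inequality[where U = "\<lambda>j \<omega>. V j \<omega> + tail j", OF _ supermartingale_V_plus_tail B])
      (use V_adapted in measurable)
  also have "\<dots> = (\<integral>\<^sup>+\<omega>\<in>B. ennreal (V k \<omega>) \<partial>M) + ennreal (tail k) * emeasure M B"
    using V_nonneg tail_nonneg by (simp add: nn_set_integral_add nn_integral_cmult_indicator)
  also have "\<dots> \<le> (\<integral>\<^sup>+\<omega>\<in>B. ennreal (V k \<omega>) \<partial>M) + ennreal (tail k)"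
    using mult_left_mono[OF emeasure_le_1, of "ennreal (tail k)" B] by (intro add_left_mono) simp
  finally show ?thesis .
qed

lemma AE_eventually_V_plus_tail_less:
  assumes "\<not> summable a" and "0 < c"
  shows "AE \<omega> in M. V 0 \<omega> \<le> r \<longrightarrow> (\<exists>k. \<forall>j\<ge>k. V j \<omega> + tail j < c)"
proof -
  define B where "B = {\<omega>\<in>space M. V 0 \<omega> \<le> r}"
  define Z where "Z = {\<omega>\<in>space M. V 0 \<omega> \<le> r \<and> (\<forall>k. \<exists>j\<ge>k. c \<le> V j \<omega> + tail j)}"
  have "{\<omega>\<in>space (F 0). V 0 \<omega> \<le> r} \<in> sets (F 0)" using V_adapted[of 0] by measurable
  then have B_F: "B \<in> sets (F k)" for k using sets_F_mono[of 0 k] by (auto simp: B_def)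
  have [measurable]: "B \<in> sets M" "Z \<in> sets M" unfolding B_def Z_def by measurable
  have "(\<integral>\<^sup>+\<omega>\<in>B. ennreal (V 0 \<omega>) \<partial>M) \<le> (\<integral>\<^sup>+\<omega>. ennreal (max r 0) \<partial>M)"
    by (intro nn_integral_mono) (auto simp: B_def split: split_indicator intro: ennreal_leI)
  also have "\<dots> < \<top>" by (simp add: emeasure_space_1)
  finally have finite: "(\<integral>\<^sup>+\<omega>\<in>B. ennreal (V 0 \<omega>) \<partial>M) < \<top>" .
  have bound: "ennreal c * emeasure M Z \<le> 0 + ennreal (2 * e)" if "0 < e" for e
  proof -
    obtain K where K: "\<And>k. k \<ge> K \<Longrightarrow> tail k < e" using eventually_tail_less[OF \<open>0 < e\<close>] by blast
    obtain k where "k \<ge> K" and small: "(\<integral>\<^sup>+\<omega>\<in>B. ennreal (V k \<omega>) \<partial>M) < ennreal e"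
      using frequently_small_set_nn_integral[OF assms(1) B_F finite \<open>0 < e\<close>] by blast
    have "Z \<subseteq> B \<inter> {\<omega>\<in>space M. \<exists>j\<ge>k. c \<le> V j \<omega> + tail j}" by (auto simp: B_def Z_def)
    then have "emeasure M Z \<le> emeasure M (B \<inter> {\<omega>\<in>space M. \<exists>j\<ge>k. c \<le> V j \<omega> + tail j})"
      by (rule emeasure_mono) measurable
    then have "ennreal c * emeasure M Z \<le> ennreal c * emeasure M (B \<inter> {\<omega>\<in>space M. \<exists>j\<ge>k. c \<le> V j \<omega> + tail j})"
      by (rule mult_left_mono) simp
    also have "\<dots> \<le> (\<integral>\<^sup>+\<omega>\<in>B. ennreal (V k \<omega>) \<partial>M) + ennreal (tail k)"
      by (rule maximal_inequality_V_plus_tail[OF B_F])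
    also have "\<dots> \<le> ennreal e + ennreal e"
      using small K[OF \<open>k \<ge> K\<close>] by (intro add_mono ennreal_leI) auto
    finally show ?thesis using \<open>0 < e\<close> by (simp add: ennreal_plus[symmetric] del: ennreal_plus)
  qed
  have "ennreal c * emeasure M Z \<le> 0"
  proof (rule ennreal_le_epsilon)
    fix e :: real assume "0 < e"
    then have "ennreal c * emeasure M Z \<le> 0 + ennreal (2 * (e / 2))" by (intro bound) simp
    then show "ennreal c * emeasure M Z \<le> 0 + ennreal e" by simp
  qed
  then have "emeasure M Z = 0" using \<open>0 < c\<close> by simp
  then have "Z \<in> null_sets M" using \<open>Z \<in> sets M\<close> by (simp add: null_sets_def)
  then show ?thesis by (rule AE_I') (auto simp: Z_def not_less)
qed

theorem AE_tendsto_zero: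
  assumes "\<not> summable a"
  shows "AE \<omega> in M. (\<lambda>k. V k \<omega>) \<longlonglongrightarrow> 0"
proof -
  have "AE \<omega> in M. \<forall>r::nat. \<forall>m::nat. V 0 \<omega> \<le> r \<longrightarrow> (\<exists>k. \<forall>j\<ge>k. V j \<omega> + tail j < 1 / Suc m)"
    unfolding AE_all_countable by (intro allI AE_eventually_V_plus_tail_less[OF assms]) simp
  then show ?thesis
  proof eventually_elim
    case (elim \<omega>)
    obtain r :: nat where r: "V 0 \<omega> \<le> r" using real_arch_simple by blast
    show "(\<lambda>k. V k \<omega>) \<longlonglongrightarrow> 0"
    proof (rule LIMSEQ_I)
      fix e :: real assume "0 < e"
      then obtain m :: nat where m: "1 / Suc m < e" by (rule nat_approx_posE)
      obtain k where k: "\<And>j. j \<ge> k \<Longrightarrow> V j \<omega> + tail j < 1 / Suc m" using elim r by blast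
      have "norm (V j \<omega> - 0) < e" if "j \<ge> k" for j
        using k[OF that] m V_nonneg[of j \<omega>] tail_nonneg[of j] by simp
      then show "\<exists>k. \<forall>j\<ge>k. norm (V j \<omega> - 0) < e" by blast
    qed
  qed
qed

end

lemma tendsto_zero_of_power_tendsto_zero:
  fixes f :: "nat \<Rightarrow> real"
  assumes "(\<lambda>k. f k ^ n) \<longlonglongrightarrow> 0" and "0 < n"
  shows "f \<longlonglongrightarrow> 0"
proof -
  have "(\<lambda>k. root n (\<bar>f k\<bar> ^ n)) \<longlonglongrightarrow> root n 0"
    using tendsto_rabs_zero[OF assms(1)] by (intro tendsto_real_root) (simp add: power_abs)
  then show ?thesis
    using assms(2) by (simp add: real_root_power_cancel tendsto_rabs_zero_iff)
qed

theorem proposition1: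
  fixes M :: "'a measure" and x w :: "nat \<Rightarrow> 'a \<Rightarrow> real" and \<alpha> :: "nat \<Rightarrow> real"
    and A\<^sub>2 A\<^sub>3 A\<^sub>4 :: real
  assumes "prob_space M"
    and x_meas: "\<And>k. x k \<in> borel_measurable M"
    and w_meas: "\<And>k. w k \<in> borel_measurable M"
    and step: "\<And>k. 0 < \<alpha> k \<and> \<alpha> k \<le> 1"
    and recur: "\<And>k \<omega>. \<omega> \<in> space M \<Longrightarrow> x (Suc k) \<omega> = x k \<omega> + \<alpha> k * (- x k \<omega> + w k \<omega>)"
    and mean0: "\<And>k. AE \<omega> in M. real_cond_exp M (nat_filtration M x k) (w k) \<omega> = 0"
    and mom2: "\<And>k. AE \<omega> in M. nn_cond_exp M (nat_filtration M x k) (\<lambda>\<omega>. ennreal ((w k \<omega>)\<^sup>2)) \<omega> \<le> ennreal A\<^sub>2"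
    and mom3: "\<And>k. AE \<omega> in M. nn_cond_exp M (nat_filtration M x k) (\<lambda>\<omega>. ennreal (\<bar>w k \<omega>\<bar> ^ 3)) \<omega> \<le> ennreal A\<^sub>3"
    and mom4: "\<And>k. AE \<omega> in M. nn_cond_exp M (nat_filtration M x k) (\<lambda>\<omega>. ennreal ((w k \<omega>) ^ 4)) \<omega> \<le> ennreal A\<^sub>4"
  shows "(\<exists>c C'. c > 0 \<and> C' > 0 \<and>
            (\<forall>k. AE \<omega> in M. nn_cond_exp M (nat_filtration M x k) (\<lambda>\<omega>. ennreal ((x (Suc k) \<omega>) ^ 4)) \<omega>
                  \<le> ennreal ((x k \<omega>) ^ 4 - c * \<alpha> k * (x k \<omega>) ^ 4 + C' * (\<alpha> k) ^ 3)))
       \<and> (\<not> summable \<alpha> \<and> summable (\<lambda>k. (\<alpha> k) ^ 3) \<longrightarrow> (AE \<omega> in M. (\<lambda>k. x k \<omega>) \<longlonglongrightarrow> 0))"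
proof -
  interpret prob_space M by fact
  define F where "F = nat_filtration M x"
  interpret nat_filtered_prob_space M F
    by unfold_locales (auto simp: F_def subalgebra_nat_filtration x_meas sets_nat_filtration_mono)
  have x_F [measurable]: "x k \<in> borel_measurable (F k)" for k
    unfolding F_def by (rule measurable_nat_filtration) simp
  \<comment> \<open>\<open>ennreal\<close> truncates at 0, so a negative moment bound acts as the bound 0.\<close>
  define C where "C = quartic_drift_const (max A\<^sub>2 0) (max A\<^sub>3 0) (max A\<^sub>4 0)"
  have C_pos: "0 < C" unfolding C_def by (rule quartic_drift_const_pos) auto
  have drift: "AE \<omega> in M. nn_cond_exp M (F k) (\<lambda>\<omega>. ennreal (x (Suc k) \<omega> ^ 4)) \<omega>
      \<le> ennreal ((1 - \<alpha> k / 2) * x k \<omega> ^ 4 + C * \<alpha> k ^ 3)" for k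
    unfolding C_def
  proof (rule sigma_finite_subalgebra.nn_cond_exp_quartic_relaxation[OF sigma_finite_subalgebra_F])
    show "x (Suc k) \<omega> = (1 - \<alpha> k) * x k \<omega> + \<alpha> k * w k \<omega>" if "\<omega> \<in> space M" for \<omega>
      using recur[OF that] by (simp add: algebra_simps)
  qed (use x_F x_meas w_meas step mean0 mom2 mom3 mom4 in \<open>simp_all add: F_def ennreal_max_0' less_imp_le\<close>)
  show ?thesis (is "?drift \<and> ?convergence")
  proof
    show ?drift
      by (rule exI[of _ "1 / 2"], rule exI[of _ C]) (use drift C_pos in \<open>simp add: F_def algebra_simps\<close>)
    have half_step: "0 \<le> \<alpha> k / 2" "\<alpha> k / 2 \<le> 1" for k using step[of k] by auto
    show ?convergence
    proof
      assume hyp: "\<not> summable \<alpha> \<and> summable (\<lambda>k. \<alpha> k ^ 3)"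
      interpret drift_process M F "\<lambda>k \<omega>. x k \<omega> ^ 4" "\<lambda>k. \<alpha> k / 2" "\<lambda>k. C * \<alpha> k ^ 3"
      proof unfold_locales
        show "(\<lambda>\<omega>. x k \<omega> ^ 4) \<in> borel_measurable (F k)" for k by measurable
      qed (use hyp half_step step C_pos drift in \<open>simp_all add: summable_mult\<close>)
      have "AE \<omega> in M. (\<lambda>k. x k \<omega> ^ 4) \<longlonglongrightarrow> 0"
        using hyp summable_divide_iff[of \<alpha> 2] by (intro AE_tendsto_zero) simp
      then show "AE \<omega> in M. (\<lambda>k. x k \<omega>) \<longlonglongrightarrow> 0"
        by eventually_elim (simp add: tendsto_zero_of_power_tendsto_zero)
    qed
  qed
qed

end
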